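(* Let $G:\Omega\to\Omega$ and $F:\Lambda\to\Lambda$ be as in the context. Given a $G$-invariant Borel probability $\mu$ on $\Omega$, there exists an $F^{-1}$-invariant Borel probability $\bar\mu$ on $\Lambda$ such that $h_{\bar\mu}(F^{-1})\ge h_\mu(G)$.
   Context: Horseshoe. $I=[0,1]$, $R_0=I\times I\times[0,1/6]$, $R_1=I\times I\times[5/6,1]$; constants $0<\lambda_0<1/3$, $\beta_0>6$, $0<\sigma_0<1/3$, $3<\beta_1<4$; $f$ the time-one map of $y'=(1-y)y$, i.e. $f^n(y)=\frac{1}{1-(1-\frac1y)e^{-n}}$, $f(0)=0$; $F(x,y,z)=(\lambda_0x,f(y),\beta_0z)$ on $R_0$, $F(x,y,z)=(\tfrac34-\lambda_0x,\sigma_0(1-y),\beta_1(z-\tfrac56))$ on $R_1$; $\Lambda=\bigcap_{n\in\mathbb{Z}}F^n(R_0\cup R_1)$, $F:\Lambda\to\Lambda$ a homeomorphism. The map $G$: $S_1=[0,\lambda_0]\times[0,1]\times\{0\}$, $S_2=[\tfrac34-\lambda_0,\tfrac34]\times[0,\sigma_0]\times\{0\}$, $S_3=[0,\lambda_0]\times[0,1]\times\{5/6\}$, $g_0=f^{-1}$, $g_1(y)=1-\sigma_0^{-1}y$, $a=\lambda_0^{-1}$; $G(x,y,z)=(ax,g_0(y),0)$ on $S_1\cup S_3$, $G(x,y,z)=(a(\tfrac34-x),g_1(y),\tfrac56)$ on $S_2$; $\Omega=\bigcap_{n\in\mathbb{N}}G^{-n}(S_1\cup S_2\cup S_3)$,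 $G:\Omega\to\Omega$. The projection $\pi:R_0\cup R_1\to\mathbb{R}^3$, $\pi(x,y,z)=(x,y,0)$ on $R_0$ and $(x,y,5/6)$ on $R_1$, is continuous, maps $\Lambda$ onto $\Omega$ and satisfies $\pi\circ F^{-1}=G\circ\pi$. *)

theory Defs
  imports "HOL-Probability.Probability"
begin

type_synonym pt = "real \<times> real \<times> real"

text \<open>Time-one map of y' = (1-y) y on [0,1], with f 0 = 0, and its inverse g0.\<close>
definition hf :: "real \<Rightarrow> real" where
  "hf y = (if y = 0 then 0 else 1 / (1 - (1 - 1 / y) * exp (-1)))"

definition hg0 :: "real \<Rightarrow> real" where
  "hg0 y = (if y = 0 then 0 else 1 / (1 - (1 - 1 / y) * exp 1))"

definition R0 :: "pt set" where "R0 = {0..1} \<times> {0..1} \<times> {0..1/6}"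
definition R1 :: "pt set" where "R1 = {0..1} \<times> {0..1} \<times> {5/6..1}"

text \<open>F is only meaningful on R0 \<union> R1; outside we set it to the identity (irrelevant).\<close>
definition hF :: "real \<Rightarrow> real \<Rightarrow> real \<Rightarrow> real \<Rightarrow> pt \<Rightarrow> pt" where
  "hF l0 b0 s0 b1 p = (case p of (x, y, z) \<Rightarrow>
     if p \<in> R0 then (l0 * x, hf y, b0 * z)
     else if p \<in> R1 then (3/4 - l0 * x, s0 * (1 - y), b1 * (z - 5/6))
     else p)"

text \<open>Lambda = intersection over n in Z of F^n(R0 \<union> R1): points having a full
  bi-infinite F-orbit inside R0 \<union> R1.\<close>
definition hLambda :: "real \<Rightarrow> real \<Rightarrow> real \<Rightarrow> real \<Rightarrow> pt set" where
  "hLambda l0 b0 s0 b1 = {p. \<exists>orb :: int \<Rightarrow> pt. orb 0 = p \<and> (\<forall>k. orb k \<in> R0 \<union> R1)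
       \<and> (\<forall>k. orb (k + 1) = hF l0 b0 s0 b1 (orb k))}"

text \<open>F^{-1} on Lambda (F restricted to Lambda is a bijection of Lambda).\<close>
definition hFinv :: "real \<Rightarrow> real \<Rightarrow> real \<Rightarrow> real \<Rightarrow> pt \<Rightarrow> pt" where
  "hFinv l0 b0 s0 b1 = inv_into (hLambda l0 b0 s0 b1) (hF l0 b0 s0 b1)"

definition S1 :: "real \<Rightarrow> pt set" where "S1 l0 = {0..l0} \<times> {0..1} \<times> {0}"
definition S2 :: "real \<Rightarrow> real \<Rightarrow> pt set" where "S2 l0 s0 = {3/4 - l0..3/4} \<times> {0..s0} \<times> {0}"
definition S3 :: "real \<Rightarrow> pt set" where "S3 l0 = {0..l0} \<times> {0..1} \<times> {5/6}"

definition hg1 :: "real \<Rightarrow> real \<Rightarrow> real" where "hg1 s0 y = 1 - y / s0"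

text \<open>G is only meaningful on S1 \<union> S2 \<union> S3; outside we set it to the identity.\<close>
definition hG :: "real \<Rightarrow> real \<Rightarrow> pt \<Rightarrow> pt" where
  "hG l0 s0 p = (case p of (x, y, z) \<Rightarrow>
     if p \<in> S1 l0 \<union> S3 l0 then (x / l0, hg0 y, 0)
     else if p \<in> S2 l0 s0 then ((3/4 - x) / l0, hg1 s0 y, 5/6)
     else p)"

definition hOmega :: "real \<Rightarrow> real \<Rightarrow> pt set" where
  "hOmega l0 s0 = {p. \<forall>n. (hG l0 s0 ^^ n) p \<in> S1 l0 \<union> S2 l0 s0 \<union> S3 l0}"

definition invariant_measure :: "'a measure \<Rightarrow> ('a \<Rightarrow> 'a) \<Rightarrow> bool" where
  "invariant_measure M T \<longleftrightarrow>
     (\<forall>A \<in> sets M. emeasure M (T -` A \<inter> space M) = emeasure M A)"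

definition fin_partitions :: "'a measure \<Rightarrow> 'a set set set" where
  "fin_partitions M = {P. finite P \<and> P \<subseteq> sets M \<and> {} \<notin> P \<and> \<Union>P = space M \<and> disjoint P}"

definition part_entropy :: "'a measure \<Rightarrow> 'a set set \<Rightarrow> real" where
  "part_entropy M P = - (\<Sum>A\<in>P. measure M A * ln (measure M A))"

definition join_iter :: "'a measure \<Rightarrow> ('a \<Rightarrow> 'a) \<Rightarrow> 'a set set \<Rightarrow> nat \<Rightarrow> 'a set set" where
  "join_iter M T P n =
     {space M \<inter> (\<Inter>i<n. (T ^^ i) -` a i) | a. \<forall>i<n. a i \<in> P} - {{}}"

definition ks_entropy_part :: "'a measure \<Rightarrow> ('a \<Rightarrow> 'a) \<Rightarrow> 'a set set \<Rightarrow> real" where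
  "ks_entropy_part M T P = lim (\<lambda>n. part_entropy M (join_iter M T P n) / real n)"

definition ks_entropy :: "'a measure \<Rightarrow> ('a \<Rightarrow> 'a) \<Rightarrow> ereal" where
  "ks_entropy M T = (SUP P \<in> fin_partitions M. ereal (ks_entropy_part M T P))"

end

theory Submission
  imports Defs
begin

text \<open>Every \<open>\<mu>\<close>-typical backward \<open>G\<close>-orbit \<open>(\<omega> n)\<close>, \<open>G (\<omega> (n + 1)) = \<omega> n\<close>, lifts to a point of
  \<open>\<Lambda>\<close> with \<open>\<pi>\<close>-image \<open>\<omega> 0\<close>: its first two coordinates are those of \<open>\<omega> 0\<close>, and its height is
  read off from the sequence of levels \<open>0\<close> or \<open>5/6\<close> visited by the orbit, because \<open>F\<close> expands
  the third coordinate. The natural extension of \<open>(\<mu>, G)\<close>, built by Kolmogorov's extension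
  theorem on the space of backward orbits, is invariant under prepending a \<open>G\<close>-image, and
  the lift turns this map into \<open>F\<^sup>-\<^sup>1\<close>. Pushing the natural extension forward along the lift
  gives an \<open>F\<^sup>-\<^sup>1\<close>-invariant \<open>\<nu>\<close> whose image under \<open>\<pi>\<close> is \<open>\<mu>\<close>. Finally, \<open>(\<Omega>, \<mu>, G)\<close> is a factor of
  \<open>(\<Lambda>, \<nu>, F\<^sup>-\<^sup>1)\<close>, and pulling finite partitions back along a factor map preserves all
  their joins and entropies.\<close>

section \<open>Entropy of factors\<close>

lemma measurable_funpow: "T \<in> measurable M M \<Longrightarrow> T ^^ n \<in> measurable M M"
  by (induction n) (auto simp: measurable_ident[unfolded id_def])

lemma image_diff_empty:
  "(\<And>A. A \<in> X \<Longrightarrow> f A = {} \<longleftrightarrow> A = {}) \<Longrightarrow> f ` X - {{}} = f ` (X - {{}})"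
  by blast

locale factor_map =
  fixes M :: "'a measure" and N :: "'b measure" and \<pi> :: "'b \<Rightarrow> 'a"
    and T :: "'a \<Rightarrow> 'a" and S :: "'b \<Rightarrow> 'b"
  assumes measurable_factor: "\<pi> \<in> measurable N M"
    and factor_onto: "\<pi> ` space N = space M"
    and distr_factor: "distr N M \<pi> = M"
    and measurable_T: "T \<in> measurable M M"
    and S_into_space: "\<And>p. p \<in> space N \<Longrightarrow> S p \<in> space N"
    and factor_commute: "\<And>p. p \<in> space N \<Longrightarrow> \<pi> (S p) = T (\<pi> p)"
begin

definition pullback :: "'a set \<Rightarrow> 'b set" where
  "pullback A = \<pi> -` A \<inter> space N"

lemma pullback_mono:
  assumes "A \<subseteq> space M" "pullback A \<subseteq> pullback B" shows "A \<subseteq> B"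
proof
  fix x assume "x \<in> A"
  have "x \<in> \<pi> ` space N"
    unfolding factor_onto using assms(1) \<open>x \<in> A\<close> by (rule subsetD)
  then obtain p where "x = \<pi> p" "p \<in> space N"
    by (rule imageE)
  then show "x \<in> B"
    using assms(2) \<open>x \<in> A\<close> unfolding pullback_def by blast
qed

lemma pullback_eq_empty_iff: "A \<subseteq> space M \<Longrightarrow> pullback A = {} \<longleftrightarrow> A = {}"
  using pullback_mono[of A "{}"] by (auto simp: pullback_def)

lemma inj_on_pullback: "inj_on pullback (Pow (space M))"
  by (rule inj_onI, rule equalityI; rule pullback_mono) auto

lemma measure_pullback: "A \<in> sets M \<Longrightarrow> measure N (pullback A) = measure M A"
  using measure_distr[OF measurable_factor, of A] by (simp add: distr_factor pullback_def)

lemma pullback_fin_partition: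
  assumes "P \<in> fin_partitions M" shows "pullback ` P \<in> fin_partitions N"
  unfolding fin_partitions_def
proof (intro CollectI conjI)
  have P: "finite P" "P \<subseteq> sets M" "{} \<notin> P" "\<Union>P = space M" "disjoint P"
    using assms by (auto simp: fin_partitions_def)
  show "finite (pullback ` P)"
    using P(1) by simp
  show "pullback ` P \<subseteq> sets N"
    using P(2) measurable_sets[OF measurable_factor] by (auto simp: pullback_def)
  have "pullback A \<noteq> {}" if "A \<in> P" for A
    using that P(3,4) pullback_eq_empty_iff[of A] by auto
  then show "{} \<notin> pullback ` P"
    by auto
  have "\<Union> (pullback ` P) = pullback (space M)"
    unfolding P(4)[symmetric] pullback_def by auto
  then show "\<Union> (pullback ` P) = space N"
    using measurable_space[OF measurable_factor] by (auto simp: pullback_def)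
  show "disjoint (pullback ` P)"
    using P(5) by (auto simp: disjoint_def pullback_def)
qed

lemma pullback_cell:
  "space N \<inter> (\<Inter>i<n. (S ^^ i) -` pullback (a i)) = pullback (space M \<inter> (\<Inter>i<n. (T ^^ i) -` a i))"
proof -
  have "p \<in> space N \<Longrightarrow> (S ^^ i) p \<in> space N \<and> \<pi> ((S ^^ i) p) = (T ^^ i) (\<pi> p)" for p i
    by (induction i) (auto simp: S_into_space factor_commute)
  then show ?thesis
    using measurable_space[OF measurable_factor] by (auto simp: pullback_def)
qed

lemma join_iter_pullback: "join_iter N S (pullback ` P) n = pullback ` join_iter M T P n"
proof -
  let ?cells = "{space M \<inter> (\<Inter>i<n. (T ^^ i) -` a i) | a. \<forall>i<n. a i \<in> P}"
  have cells: "{space N \<inter> (\<Inter>i<n. (S ^^ i) -` b i) | b. \<forall>i<n. b i \<in> pullback ` P} = pullback ` ?cells"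
  proof (intro equalityI subsetI)
    fix C assume "C \<in> {space N \<inter> (\<Inter>i<n. (S ^^ i) -` b i) | b. \<forall>i<n. b i \<in> pullback ` P}"
    then obtain b where C: "C = space N \<inter> (\<Inter>i<n. (S ^^ i) -` b i)" and "\<forall>i<n. b i \<in> pullback ` P"
      unfolding mem_Collect_eq by (elim exE conjE)
    then have "\<forall>i\<in>{..<n}. \<exists>a\<in>P. b i = pullback a"
      by (simp add: image_iff)
    then obtain a where a: "\<forall>i\<in>{..<n}. a i \<in> P \<and> b i = pullback (a i)"
      by (metis bchoice)
    then have "C = space N \<inter> (\<Inter>i<n. (S ^^ i) -` pullback (a i))"
      unfolding C by (intro arg_cong2[where f="(\<inter>)"] INF_cong) auto
    also have "\<dots> = pullback (space M \<inter> (\<Inter>i<n. (T ^^ i) -` a i))"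
      by (rule pullback_cell)
    finally show "C \<in> pullback ` ?cells"
      using a by (intro image_eqI) auto
  next
    fix C assume "C \<in> pullback ` ?cells"
    then obtain a where "C = pullback (space M \<inter> (\<Inter>i<n. (T ^^ i) -` a i))" "\<forall>i<n. a i \<in> P"
      by (auto simp: image_iff)
    then show "C \<in> {space N \<inter> (\<Inter>i<n. (S ^^ i) -` b i) | b. \<forall>i<n. b i \<in> pullback ` P}"
      unfolding pullback_cell[symmetric] by (intro CollectI exI[of _ "\<lambda>i. pullback (a i)"]) auto
  qed
  have "pullback A = {} \<longleftrightarrow> A = {}" if "A \<in> ?cells" for A
    using that by (intro pullback_eq_empty_iff) auto
  then show ?thesis
    unfolding join_iter_def cells by (rule image_diff_empty)
qed

lemma join_iter_sets:
  assumes "P \<subseteq> sets M" shows "join_iter M T P n \<subseteq> sets M"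
proof
  fix C assume "C \<in> join_iter M T P n"
  then obtain a where C: "C = space M \<inter> (\<Inter>i<n. (T ^^ i) -` a i \<inter> space M)" and a: "\<forall>i<n. a i \<in> P"
    unfolding join_iter_def by blast
  have "(T ^^ i) -` a i \<inter> space M \<in> sets M" if "i < n" for i
    using measurable_sets[OF measurable_funpow[OF measurable_T]] a assms that by blast
  then show "C \<in> sets M"
    unfolding C by (cases "n = 0") (auto intro!: sets.Int sets.countable_INT' simp del: INT_simps)
qed

lemma part_entropy_pullback:
  assumes "Q \<subseteq> sets M" shows "part_entropy N (pullback ` Q) = part_entropy M Q"
proof -
  have "inj_on pullback Q"
    using assms sets.sets_into_space by (intro inj_on_subset[OF inj_on_pullback]) auto
  then show ?thesis
    using assms unfolding part_entropy_def by (auto simp: sum.reindex measure_pullback intro!: sum.cong)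
qed

lemma ks_entropy_le: "ks_entropy M T \<le> ks_entropy N S"
  unfolding ks_entropy_def
proof (rule SUP_least)
  fix P assume P: "P \<in> fin_partitions M"
  then have "P \<subseteq> sets M" by (simp add: fin_partitions_def)
  then have "ks_entropy_part M T P = ks_entropy_part N S (pullback ` P)"
    unfolding ks_entropy_part_def join_iter_pullback
    by (simp add: part_entropy_pullback join_iter_sets)
  then show "ereal (ks_entropy_part M T P) \<le> (SUP Q \<in> fin_partitions N. ereal (ks_entropy_part N S Q))"
    using pullback_fin_partition[OF P] by (auto intro: SUP_upper)
qed

end

section \<open>Natural extension\<close>

lemma invariant_measure_iff_distr:
  assumes "T \<in> measurable M M"
  shows "invariant_measure M T \<longleftrightarrow> distr M M T = M"
proof
  assume "invariant_measure M T"
  then show "distr M M T = M"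
    by (intro measure_eqI) (auto simp: emeasure_distr[OF assms] invariant_measure_def)
next
  assume distr: "distr M M T = M"
  show "invariant_measure M T"
    unfolding invariant_measure_def
  proof
    fix A assume "A \<in> sets M"
    then have "emeasure M (T -` A \<inter> space M) = emeasure (distr M M T) A"
      by (simp add: emeasure_distr[OF assms])
    then show "emeasure M (T -` A \<inter> space M) = emeasure M A"
      unfolding distr .
  qed
qed

lemma invariant_measure_distr:
  assumes \<Psi>: "\<Psi> \<in> measurable P N" and R: "R \<in> measurable P P" "distr P P R = P"
    and S: "S \<in> measurable N N" and commute: "AE \<omega> in P. S (\<Psi> \<omega>) = \<Psi> (R \<omega>)"
  shows "invariant_measure (distr P N \<Psi>) S"
proof -
  have "distr (distr P N \<Psi>) (distr P N \<Psi>) S = distr (distr P N \<Psi>) N S"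
    by (rule distr_cong) simp_all
  also have "\<dots> = distr P N (S \<circ> \<Psi>)"
    using S \<Psi> by (rule distr_distr)
  also have "\<dots> = distr P N (\<Psi> \<circ> R)"
  proof (rule distr_cong_AE)
    show "AE \<omega> in P. (S \<circ> \<Psi>) \<omega> = (\<Psi> \<circ> R) \<omega>"
      using commute by simp
  qed (use \<Psi> S R in \<open>simp_all add: measurable_comp\<close>)
  also have "\<dots> = distr P N \<Psi>"
    using distr_distr[OF \<Psi> R(1)] R(2) by simp
  finally have "distr (distr P N \<Psi>) (distr P N \<Psi>) S = distr P N \<Psi>" .
  moreover have "S \<in> measurable (distr P N \<Psi>) (distr P N \<Psi>)"
    using S measurable_cong_sets[OF sets_distr sets_distr] by blast
  ultimately show ?thesis
    by (simp add: invariant_measure_iff_distr)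
qed

lemma PiM_eqI_marginals:
  assumes sets: "sets P = sets (PiM I M)" "sets Q = sets (PiM I M)" and "finite_measure P"
    and marginals: "\<And>J. finite J \<Longrightarrow> J \<subseteq> I \<Longrightarrow>
      distr P (PiM J M) (\<lambda>\<omega>. restrict \<omega> J) = distr Q (PiM J M) (\<lambda>\<omega>. restrict \<omega> J)"
  shows "P = Q"
proof (rule measure_eqI_PiM_infinite[OF sets _ assms(3)])
  fix J A assume J: "finite J" "J \<subseteq> I" and A: "\<And>i. i \<in> J \<Longrightarrow> A i \<in> sets (M i)"
  have "PiE J A \<in> sets (PiM J M)"
    using J(1) A by (rule sets_PiM_I_finite)
  then show "emeasure P (prod_emb I M J (PiE J A)) = emeasure Q (prod_emb I M J (PiE J A))"
    using marginals[OF J] emeasure_distr_restrict[OF J(2) sets(1)] emeasure_distr_restrict[OF J(2) sets(2)]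
    by metis
qed

lemma (in polish_projective) distr_lim_restrict:
  assumes "J \<subseteq> I" "finite J"
  shows "distr lim (PiM J (\<lambda>_. borel)) (\<lambda>\<omega>. restrict \<omega> J) = P J"
proof (rule measure_eqI)
  fix A assume "A \<in> sets (distr lim (PiM J (\<lambda>_. borel)) (\<lambda>\<omega>. restrict \<omega> J))"
  then show "emeasure (distr lim (PiM J (\<lambda>_. borel)) (\<lambda>\<omega>. restrict \<omega> J)) A = emeasure (P J) A"
    using assms by (simp add: emeasure_distr_restrict emeasure_lim_emb)
qed (simp add: sets_P assms)

definition backward_orbits :: "('a \<Rightarrow> 'a) \<Rightarrow> 'a set \<Rightarrow> (nat \<Rightarrow> 'a) set" where
  "backward_orbits T X = {\<omega>. \<forall>n. \<omega> n \<in> X \<and> T (\<omega> (Suc n)) = \<omega> n}"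

definition natural_extension_map :: "('a \<Rightarrow> 'a) \<Rightarrow> (nat \<Rightarrow> 'a) \<Rightarrow> nat \<Rightarrow> 'a" where
  "natural_extension_map T \<omega> = case_nat (T (\<omega> 0)) \<omega>"

lemma natural_extension_map_Suc [simp]: "natural_extension_map T \<omega> \<circ> Suc = \<omega>"
  by (simp add: natural_extension_map_def comp_def)

lemma natural_extension_map_backward_orbits:
  assumes "\<omega> \<in> backward_orbits T X" "\<And>x. x \<in> X \<Longrightarrow> T x \<in> X"
  shows "natural_extension_map T \<omega> \<in> backward_orbits T X"
  using assms unfolding backward_orbits_def natural_extension_map_def
  by (auto split: nat.split)

lemma backward_orbits_Suc: "\<omega> \<in> backward_orbits T X \<Longrightarrow> \<omega> \<circ> Suc \<in> backward_orbits T X"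
  by (simp add: backward_orbits_def)

lemma exists_backward_orbit:
  assumes "\<And>q. q \<in> X \<Longrightarrow> \<exists>p\<in>X. T p = q" "q \<in> X"
  shows "\<exists>\<omega>\<in>backward_orbits T X. \<omega> 0 = q"
proof -
  obtain pre where pre: "\<And>q. q \<in> X \<Longrightarrow> pre q \<in> X \<and> T (pre q) = q"
    using assms(1) by metis
  have "(pre ^^ n) q \<in> X" for n
    using assms(2) pre by (induction n) auto
  then have "(\<lambda>n. (pre ^^ n) q) \<in> backward_orbits T X"
    using pre by (simp add: backward_orbits_def)
  then show ?thesis
    by (intro bexI[of _ "\<lambda>n. (pre ^^ n) q"]) simp_all
qed

lemma backward_orbit_bi_infinite:
  assumes \<omega>: "\<omega> \<in> backward_orbits T X" and T: "\<And>x. x \<in> X \<Longrightarrow> T x \<in> X"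
  obtains V :: "int \<Rightarrow> nat \<Rightarrow> 'a"
  where "V 0 = \<omega>" "\<And>k. V k \<in> backward_orbits T X" "\<And>k. V (k + 1) = V k \<circ> Suc"
proof -
  define V where "V k = (if 0 \<le> k then (\<lambda>n. \<omega> (n + nat k)) else (natural_extension_map T ^^ nat (- k)) \<omega>)"
    for k :: int
  have "(natural_extension_map T ^^ m) \<omega> \<in> backward_orbits T X" for m
    using \<omega> by (induction m) (auto intro: natural_extension_map_backward_orbits T)
  then have orbit: "V k \<in> backward_orbits T X" for k
    using \<omega> by (simp add: V_def backward_orbits_def)
  have shift: "V (k + 1) = V k \<circ> Suc" for k
  proof (cases "0 \<le> k")
    case False
    then have "V (k + 1) = (natural_extension_map T ^^ nat (- (k + 1))) \<omega>"
      by (simp add: V_def)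
    moreover have "nat (- k) = Suc (nat (- (k + 1)))"
      using False by simp
    ultimately show ?thesis
      using False by (simp add: V_def)
  qed (simp add: V_def comp_def nat_add_distrib)
  have "V 0 = \<omega>"
    by (simp add: V_def)
  then show ?thesis
    using orbit shift by (rule that)
qed

locale natural_extension =
  fixes \<mu> :: "'a::polish_space measure" and T :: "'a \<Rightarrow> 'a" and X :: "'a set"
  assumes prob_space_\<mu>: "prob_space \<mu>"
    and sets_\<mu>: "sets \<mu> = sets (restrict_space borel X)"
    and X_borel [measurable]: "X \<in> sets borel"
    and T_borel [measurable]: "T \<in> borel_measurable borel"
    and T_into: "\<And>x. x \<in> X \<Longrightarrow> T x \<in> X"
    and invariant: "invariant_measure \<mu> T"
begin

lemma space_\<mu>: "space \<mu> = X"
  using sets_eq_imp_space_eq[OF sets_\<mu>] by (simp add: space_restrict_space)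

lemma measurable_\<mu>: "f \<in> measurable borel N \<Longrightarrow> f \<in> measurable \<mu> N"
  using measurable_cong_sets[OF sets_\<mu> refl] measurable_restrict_space1 by blast

lemma measurable_T: "T \<in> measurable \<mu> \<mu>"
  using measurable_restrict_space3[OF T_borel, of X X] T_into measurable_cong_sets[OF sets_\<mu> sets_\<mu>]
  by blast

lemma distr_funpow: "distr \<mu> \<mu> (T ^^ n) = \<mu>"
proof (induction n)
  case (Suc n)
  have "distr \<mu> \<mu> (T ^^ Suc n) = distr (distr \<mu> \<mu> T) \<mu> (T ^^ n)"
    unfolding funpow_Suc_right by (rule distr_distr[symmetric, OF measurable_funpow[OF measurable_T] measurable_T])
  also have "\<dots> = \<mu>"
    using Suc invariant measurable_T by (simp add: invariant_measure_iff_distr)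
  finally show ?case .
qed (simp add: id_def)

definition window :: "nat set \<Rightarrow> nat \<Rightarrow> 'a \<Rightarrow> nat \<Rightarrow> 'a" where
  "window J N q = (\<lambda>j\<in>J. (T ^^ (N - j)) q)"

text \<open>The law of \<open>(\<omega> j)\<^sub>j\<^sub>\<in>\<^sub>J\<close> when \<open>\<omega> N\<close> is \<open>\<mu>\<close>-distributed and \<open>\<omega> j = T\<^bsup>N - j\<^esup> (\<omega> N)\<close>;
  by invariance it does not depend on \<open>N\<close> (see \<open>distr_window\<close>).\<close>
definition marginal :: "nat set \<Rightarrow> (nat \<Rightarrow> 'a) measure" where
  "marginal J = distr \<mu> (PiM J (\<lambda>_. borel)) (window J (Max (insert 0 J)))"

lemma measurable_window: "window J N \<in> measurable \<mu> (PiM J (\<lambda>_. borel))"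
  unfolding window_def by (intro measurable_restrict measurable_\<mu> measurable_funpow T_borel)

lemma distr_window:
  assumes "finite J" "J \<subseteq> {..N}"
  shows "distr \<mu> (PiM J (\<lambda>_. borel)) (window J N) = marginal J"
proof -
  define M where "M = Max (insert 0 J)"
  have "M \<le> N" "J \<subseteq> {..M}"
    using assms by (auto simp: M_def)
  then have "N - j = (M - j) + (N - M)" if "j \<in> J" for j
    using that by auto
  then have "window J N = window J M \<circ> (T ^^ (N - M))"
    by (auto simp: window_def fun_eq_iff funpow_add)
  then have "distr \<mu> (PiM J (\<lambda>_. borel)) (window J N) = distr (distr \<mu> \<mu> (T ^^ (N - M))) (PiM J (\<lambda>_. borel)) (window J M)"
    by (simp add: distr_distr measurable_window measurable_funpow measurable_T)
  then show ?thesis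
    by (simp add: distr_funpow marginal_def M_def)
qed

lemma projective_family_marginal: "projective_family UNIV marginal (\<lambda>_. borel)"
  unfolding projective_family_def
proof (intro conjI allI impI)
  fix J :: "nat set" assume "finite J" "J \<subseteq> UNIV"
  show "prob_space (marginal J)"
    unfolding marginal_def by (rule prob_space.prob_space_distr[OF prob_space_\<mu> measurable_window])
next
  fix J H :: "nat set" assume JH: "J \<subseteq> H" "finite H" "H \<subseteq> UNIV"
  define N where "N = Max (insert 0 H)"
  have "(\<lambda>f. restrict f J) \<circ> window H N = window J N"
    using JH(1) by (auto simp: window_def fun_eq_iff)
  then have "distr (distr \<mu> (PiM H (\<lambda>_. borel)) (window H N)) (PiM J (\<lambda>_. borel)) (\<lambda>f. restrict f J) = distr \<mu> (PiM J (\<lambda>_. borel)) (window J N)"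
    by (simp add: distr_distr measurable_window measurable_restrict_subset[OF JH(1)])
  moreover have "finite J" "J \<subseteq> {..N}" "H \<subseteq> {..N}"
    using JH finite_subset by (auto simp: N_def)
  ultimately show "marginal J = distr (marginal H) (PiM J (\<lambda>_. borel)) (\<lambda>f. restrict f J)"
    using JH(2) by (simp add: distr_window)
qed

end

sublocale natural_extension \<subseteq> E: polish_projective "UNIV :: nat set" marginal
  unfolding polish_projective_def by (rule projective_family_marginal)

context natural_extension
begin

lemma measurable_lim: "f \<in> measurable (PiM UNIV (\<lambda>_. borel)) N \<Longrightarrow> f \<in> measurable E.lim N"
  by (simp cong: measurable_cong_sets)

lemma measurable_restrict_lim: "(\<lambda>\<omega>. restrict \<omega> K) \<in> measurable E.lim (PiM K (\<lambda>_. borel))"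
  by (intro measurable_lim measurable_restrict_subset) simp

lemma distr_lim_restrict_window:
  assumes "finite J" "J \<subseteq> {..N}"
  shows "distr E.lim (PiM J (\<lambda>_. borel)) (\<lambda>\<omega>. restrict \<omega> J) = distr \<mu> (PiM J (\<lambda>_. borel)) (window J N)"
  using assms by (simp add: E.distr_lim_restrict distr_window)

lemma AE_lim_window:
  assumes J: "finite J" "J \<subseteq> {..N}"
    and Q: "{f \<in> space (PiM J (\<lambda>_. borel)). Q f} \<in> sets (PiM J (\<lambda>_. borel))"
    and AE: "AE q in \<mu>. Q (window J N q)"
  shows "AE \<omega> in E.lim. Q (restrict \<omega> J)"
proof -
  have "AE f in distr \<mu> (PiM J (\<lambda>_. borel)) (window J N). Q f"
    using AE by (subst AE_distr_iff[OF measurable_window Q])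
  then have "AE f in distr E.lim (PiM J (\<lambda>_. borel)) (\<lambda>\<omega>. restrict \<omega> J). Q f"
    unfolding distr_lim_restrict_window[OF J] .
  then show ?thesis
    by (subst (asm) AE_distr_iff[OF measurable_restrict_lim Q])
qed

lemma AE_backward_orbits: "AE \<omega> in E.lim. \<omega> \<in> backward_orbits T X"
proof -
  have "AE \<omega> in E.lim. \<omega> n \<in> X \<and> T (\<omega> (Suc n)) = \<omega> n" for n
  proof -
    have "{f \<in> space (PiM {n, Suc n} (\<lambda>_. borel)). f n \<in> X \<and> T (f (Suc n)) = f n}
        \<in> sets (PiM {n, Suc n} (\<lambda>_. borel))"
      using measurable_equality_set[of "\<lambda>f. T (f (Suc n))" "PiM {n, Suc n} (\<lambda>_. borel)" "\<lambda>f. f n"]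
      by measurable
    moreover have "AE q in \<mu>. window {n, Suc n} (Suc n) q n \<in> X
        \<and> T (window {n, Suc n} (Suc n) q (Suc n)) = window {n, Suc n} (Suc n) q n"
      by (rule AE_I2) (simp add: window_def space_\<mu> T_into)
    ultimately show ?thesis
      by (auto dest: AE_lim_window[rotated 2])
  qed
  then show ?thesis
    unfolding backward_orbits_def by (simp add: AE_all_countable)
qed

lemma distr_lim_coordinate: "distr E.lim borel (\<lambda>\<omega>. \<omega> 0) = distr \<mu> borel (\<lambda>q. q)"
proof -
  have "distr E.lim borel (\<lambda>\<omega>. \<omega> 0) = distr (distr E.lim (PiM {0} (\<lambda>_. borel)) (\<lambda>\<omega>. restrict \<omega> {0})) borel (\<lambda>f. f 0)"
    by (subst distr_distr) (auto simp: comp_def measurable_restrict_lim)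
  also have "\<dots> = distr (distr \<mu> (PiM {0} (\<lambda>_. borel)) (window {0} 0)) borel (\<lambda>f. f 0)"
    by (simp add: distr_lim_restrict_window)
  also have "\<dots> = distr \<mu> borel (\<lambda>q. q)"
    by (subst distr_distr) (auto simp: comp_def window_def measurable_window)
  finally show ?thesis .
qed

lemma distr_lim_eq:
  assumes f: "f \<in> measurable E.lim \<mu>" and coordinate: "AE \<omega> in E.lim. f \<omega> = \<omega> 0"
  shows "distr E.lim \<mu> f = \<mu>"
proof (rule measure_eqI)
  fix A assume "A \<in> sets (distr E.lim \<mu> f)"
  then have A: "A \<in> sets \<mu>" "A \<in> sets borel"
    using sets_restrict_space_iff[of X borel A] X_borel sets_\<mu> by auto
  have id: "(\<lambda>q. q) \<in> measurable \<mu> borel"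
    by (rule measurable_\<mu>[OF measurable_ident_sets[OF refl]])
  have f_borel: "f \<in> borel_measurable E.lim"
    using measurable_compose[OF f id] .
  have "distr E.lim borel f = distr E.lim borel (\<lambda>\<omega>. \<omega> 0)"
    by (rule distr_cong_AE[OF refl refl coordinate f_borel measurable_lim]) simp
  then have distr_f: "distr E.lim borel f = distr \<mu> borel (\<lambda>q. q)"
    by (simp add: distr_lim_coordinate)
  have "emeasure (distr E.lim \<mu> f) A = emeasure (distr E.lim borel f) A"
    by (simp add: emeasure_distr[OF f A(1)] emeasure_distr[OF f_borel A(2)])
  also have "\<dots> = emeasure \<mu> A"
    using emeasure_distr[OF id A(2)] sets.Int_space_eq2[OF A(1)] by (simp add: distr_f)
  finally show "emeasure (distr E.lim \<mu> f) A = emeasure \<mu> A" .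
qed simp

lemma measurable_natural_extension_map:
  "natural_extension_map T \<in> measurable E.lim E.lim"
  unfolding measurable_cong_sets[OF E.sets_lim E.sets_lim] natural_extension_map_def by measurable

lemma measurable_restrict_natural_extension_map:
  assumes "J \<subseteq> {..N}"
  shows "(\<lambda>f. restrict (natural_extension_map T f) J) \<in> measurable (PiM {..N} (\<lambda>_. borel)) (PiM J (\<lambda>_. borel))"
proof (rule measurable_restrict)
  fix j assume "j \<in> J"
  then show "(\<lambda>f. natural_extension_map T f j) \<in> borel_measurable (PiM {..N} (\<lambda>_. borel))"
    using assms by (cases j) (auto simp: natural_extension_map_def)
qed

lemma restrict_natural_extension_map_window:
  assumes "J \<subseteq> {..N}"
  shows "(\<lambda>f. restrict (natural_extension_map T f) J) \<circ> window {..N} N = window J N \<circ> T"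
proof -
  have "(T ^^ (N - i)) q = (T ^^ (N - Suc i)) (T q)" if "Suc i \<in> J" for i q
  proof -
    have "N - i = Suc (N - Suc i)"
      using that assms by auto
    then show ?thesis
      by (simp add: funpow_Suc_right del: funpow.simps)
  qed
  then show ?thesis
    using assms by (auto simp: fun_eq_iff window_def natural_extension_map_def funpow_swap1
        split: nat.split)
qed

lemma distr_natural_extension_map: "distr E.lim E.lim (natural_extension_map T) = E.lim"
proof (rule PiM_eqI_marginals)
  show "finite_measure (distr E.lim E.lim (natural_extension_map T))"
    by (intro prob_space.finite_measure prob_space.prob_space_distr[OF E.P.prob_space_axioms]
        measurable_natural_extension_map)
next
  fix J :: "nat set" assume J: "finite J" "J \<subseteq> UNIV"
  define N where "N = Max (insert 0 J)"
  let ?res = "\<lambda>K \<omega>. restrict \<omega> K" and ?PiM = "\<lambda>K. PiM K (\<lambda>_. borel :: 'a measure)"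
  let ?h = "\<lambda>f. restrict (natural_extension_map T f) J"
  have JN: "J \<subseteq> {..N}"
    using J by (auto simp: N_def)
  note h = measurable_restrict_natural_extension_map[OF JN]
  have "?res J \<circ> natural_extension_map T = ?h \<circ> ?res {..N}"
    using JN by (auto simp: fun_eq_iff natural_extension_map_def split: nat.split)
  then have "distr (distr E.lim E.lim (natural_extension_map T)) (?PiM J) (?res J)
      = distr E.lim (?PiM J) (?h \<circ> ?res {..N})"
    by (simp add: distr_distr measurable_natural_extension_map measurable_restrict_lim)
  also have "\<dots> = distr (distr E.lim (?PiM {..N}) (?res {..N})) (?PiM J) ?h"
    by (rule distr_distr[symmetric, OF h measurable_restrict_lim])
  also have "\<dots> = distr (distr \<mu> (?PiM {..N}) (window {..N} N)) (?PiM J) ?h"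
    by (subst distr_lim_restrict_window[of "{..N}" N]) auto
  also have "\<dots> = distr (distr \<mu> \<mu> T) (?PiM J) (window J N)"
    using restrict_natural_extension_map_window[OF JN]
    by (simp add: distr_distr h measurable_window measurable_T)
  also have "\<dots> = distr E.lim (?PiM J) (?res J)"
    using invariant measurable_T J JN
    by (simp add: invariant_measure_iff_distr distr_lim_restrict_window)
  finally show "distr (distr E.lim E.lim (natural_extension_map T)) (?PiM J) (?res J)
      = distr E.lim (?PiM J) (?res J)" .
qed simp_all

end

section \<open>The horseshoe\<close>

definition logistic_flow :: "real \<Rightarrow> real \<Rightarrow> real" where
  "logistic_flow t y = (if y = 0 then 0 else 1 / (1 - (1 - 1 / y) * exp (- t)))"

lemma logistic_flow_denominator:
  fixes y t :: real
  assumes "0 < y" "y \<le> 1" shows "1 \<le> 1 - (1 - 1 / y) * exp (- t)"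
proof -
  have "1 - 1 / y \<le> 0"
    using assms by (simp add: le_divide_eq_1_pos)
  then show ?thesis
    by (simp add: mult_nonpos_nonneg)
qed

lemma logistic_flow_range:
  assumes "0 \<le> y" "y \<le> 1" shows "0 \<le> logistic_flow t y \<and> logistic_flow t y \<le> 1"
  using assms logistic_flow_denominator[of y t] by (auto simp: logistic_flow_def)

lemma logistic_flow_add:
  assumes "0 \<le> y" "y \<le> 1" shows "logistic_flow s (logistic_flow t y) = logistic_flow (s + t) y"
proof (cases "y = 0")
  case False
  define d where "d = 1 - (1 - 1 / y) * exp (- t)"
  have "1 \<le> d"
    unfolding d_def using False assms by (intro logistic_flow_denominator) auto
  then have "logistic_flow s (logistic_flow t y) = 1 / (1 - (1 - d) * exp (- s))"
    using False by (simp add: logistic_flow_def d_def[symmetric])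
  also have "(1 - d) * exp (- s) = (1 - 1 / y) * exp (- (s + t))"
    unfolding d_def minus_add_distrib exp_add by simp
  finally show ?thesis
    using False by (simp add: logistic_flow_def)
qed (simp add: logistic_flow_def)

lemma hf_eq: "hf = logistic_flow 1" and hg0_eq: "hg0 = logistic_flow (- 1)"
  by (simp_all add: fun_eq_iff hf_def hg0_def logistic_flow_def)

lemma hf_range: "0 \<le> y \<Longrightarrow> y \<le> 1 \<Longrightarrow> 0 \<le> hf y \<and> hf y \<le> 1"
  and hg0_range: "0 \<le> y \<Longrightarrow> y \<le> 1 \<Longrightarrow> 0 \<le> hg0 y \<and> hg0 y \<le> 1"
  by (simp_all add: hf_eq hg0_eq logistic_flow_range)

lemma hg0_hf: "0 \<le> y \<Longrightarrow> y \<le> 1 \<Longrightarrow> hg0 (hf y) = y"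
  and hf_hg0: "0 \<le> y \<Longrightarrow> y \<le> 1 \<Longrightarrow> hf (hg0 y) = y"
  by (simp_all add: hf_eq hg0_eq logistic_flow_add) (simp_all add: logistic_flow_def)

lemma hf_borel [measurable]: "hf \<in> borel_measurable borel"
  unfolding hf_def by measurable

lemma hg0_borel [measurable]: "hg0 \<in> borel_measurable borel"
  unfolding hg0_def by measurable

lemma borel_measurable_coordinates [measurable]:
  "(fst :: pt \<Rightarrow> real) \<in> borel_measurable borel"
  "(\<lambda>p :: pt. fst (snd p)) \<in> borel_measurable borel"
  "(\<lambda>p :: pt. snd (snd p)) \<in> borel_measurable borel"
  by (intro borel_measurable_continuous_onI continuous_intros)+

locale horseshoe =
  fixes l0 b0 s0 b1 :: real
  assumes l0: "0 < l0" "l0 < 1/3" and b0: "6 < b0" and s0: "0 < s0" "s0 < 1/3"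
    and b1: "3 < b1" "b1 < 4"
begin

abbreviation "G \<equiv> hG l0 s0"
abbreviation "\<Omega> \<equiv> hOmega l0 s0"
abbreviation "F \<equiv> hF l0 b0 s0 b1"
abbreviation "\<Lambda> \<equiv> hLambda l0 b0 s0 b1"
abbreviation "Finv \<equiv> hFinv l0 b0 s0 b1"
abbreviation "S123 \<equiv> S1 l0 \<union> S2 l0 s0 \<union> S3 l0"

lemma G_S13: "(x, y, z) \<in> S1 l0 \<union> S3 l0 \<Longrightarrow> G (x, y, z) = (x / l0, hg0 y, 0)"
  by (simp add: hG_def)

lemma G_S2: "(x, y, z) \<in> S2 l0 s0 \<Longrightarrow> G (x, y, z) = ((3/4 - x) / l0, 1 - y / s0, 5/6)"
  using l0 by (auto simp: hG_def hg1_def S1_def S2_def S3_def)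

lemma Omega_subset: "\<Omega> \<subseteq> S123"
  unfolding hOmega_def by (metis (no_types, lifting) mem_Collect_eq funpow_0 subsetI)

lemma G_Omega:
  assumes "p \<in> \<Omega>" shows "G p \<in> \<Omega>"
proof -
  have "(G ^^ n) (G p) = (G ^^ Suc n) p" for n
    by (simp only: funpow_Suc_right comp_def)
  then show ?thesis
    using assms by (simp add: hOmega_def del: funpow.simps)
qed

lemma G_preimage_S123:
  assumes "q \<in> S123" shows "\<exists>p\<in>S123. G p = q"
proof -
  obtain x y z where q: "q = (x, y, z)" and x: "0 \<le> x" "x \<le> 3/4" and y: "0 \<le> y" "y \<le> 1"
    using assms l0 s0 by (cases q) (auto simp: S1_def S2_def S3_def)
  have lx: "0 \<le> l0 * x" "l0 * x \<le> l0" if "x \<le> 1"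
    using l0 x that by (auto simp: mult_left_le)
  show ?thesis
  proof (cases "z = 5/6")
    case True
    then have "x \<le> l0"
      using assms q l0 s0 by (auto simp: S1_def S2_def S3_def)
    then have p: "(3/4 - l0 * x, s0 * (1 - y), 0) \<in> S2 l0 s0"
      using lx l0 s0 y by (auto simp: S2_def mult_left_le)
    then show ?thesis
      using G_S2[OF p] l0 s0 q True by (intro bexI[of _ "(3/4 - l0 * x, s0 * (1 - y), 0)"]) auto
  next
    case False
    then have "z = 0" "x \<le> 1"
      using assms q l0 by (auto simp: S1_def S2_def S3_def)
    then have p: "(l0 * x, hf y, 0) \<in> S1 l0"
      using lx hf_range[OF y] by (simp add: S1_def)
    then show ?thesis
      using G_S13[of "l0 * x" "hf y" 0] l0 hg0_hf[OF y] q \<open>z = 0\<close>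
      by (intro bexI[of _ "(l0 * x, hf y, 0)"]) auto
  qed
qed

lemma G_preimage_Omega:
  assumes "q \<in> \<Omega>" shows "\<exists>p\<in>\<Omega>. G p = q"
proof -
  obtain p where p: "p \<in> S123" "G p = q"
    using G_preimage_S123 Omega_subset assms by blast
  have "(G ^^ n) p \<in> S123" for n
    using p assms by (cases n) (auto simp: hOmega_def funpow_Suc_right simp del: funpow.simps)
  then have "p \<in> \<Omega>"
    by (simp add: hOmega_def)
  then show ?thesis
    using p(2) by blast
qed

lemma F_R0: "(x, y, z) \<in> R0 \<Longrightarrow> F (x, y, z) = (l0 * x, hf y, b0 * z)"
  by (simp add: hF_def)

lemma F_R1: "(x, y, z) \<in> R1 \<Longrightarrow> F (x, y, z) = (3/4 - l0 * x, s0 * (1 - y), b1 * (z - 5/6))"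
  by (auto simp: hF_def R0_def R1_def)

definition Finv_piecewise :: "pt \<Rightarrow> pt" where
  "Finv_piecewise p = (if fst p \<le> l0 then (fst p / l0, hg0 (fst (snd p)), snd (snd p) / b0)
     else ((3/4 - fst p) / l0, 1 - fst (snd p) / s0, snd (snd p) / b1 + 5/6))"

lemma Finv_piecewise_F:
  assumes "q \<in> R0 \<union> R1" shows "Finv_piecewise (F q) = q"
proof -
  obtain x y z where q: "q = (x, y, z)" and x: "0 \<le> x" "x \<le> 1" and y: "0 \<le> y" "y \<le> 1"
    using assms by (cases q) (auto simp: R0_def R1_def)
  have lx: "0 \<le> l0 * x" "l0 * x \<le> l0"
    using l0 x by (auto simp: mult_left_le)
  show ?thesis
  proof (cases "q \<in> R0")
    case True
    then show ?thesis
      using F_R0 q lx l0 b0 hg0_hf[OF y] by (simp add: Finv_piecewise_def)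
  next
    case False
    then have "F q = (3/4 - l0 * x, s0 * (1 - y), b1 * (z - 5/6))"
      using assms F_R1 q by simp
    moreover have "\<not> 3/4 - l0 * x \<le> l0"
      using lx l0 by linarith
    ultimately show ?thesis
      using q l0 s0 b1 by (simp add: Finv_piecewise_def)
  qed
qed

lemma Lambda_subset: "\<Lambda> \<subseteq> R0 \<union> R1"
proof
  fix p assume "p \<in> \<Lambda>"
  then obtain orb :: "int \<Rightarrow> pt" where "orb 0 = p" "\<forall>k. orb k \<in> R0 \<union> R1"
    unfolding hLambda_def by blast
  then show "p \<in> R0 \<union> R1"
    by metis
qed

lemma Lambda_F_preimage:
  assumes "p \<in> \<Lambda>" shows "\<exists>q\<in>\<Lambda>. F q = p"
proof -
  obtain orb :: "int \<Rightarrow> pt" where orb: "orb 0 = p" "\<forall>k. orb k \<in> R0 \<union> R1" "\<forall>k. orb (k + 1) = F (orb k)"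
    using assms unfolding hLambda_def by blast
  have "orb (- 1) \<in> \<Lambda>"
    unfolding hLambda_def
  proof (intro CollectI exI[of _ "\<lambda>k. orb (k - 1)"] conjI allI)
    fix k :: int
    show "orb (k - 1) \<in> R0 \<union> R1"
      using orb(2) by blast
    show "orb (k + 1 - 1) = F (orb (k - 1))"
      using orb(3)[rule_format, of "k - 1"] by simp
  qed simp
  moreover have "F (orb (- 1)) = p"
    using orb(1) spec[OF orb(3), of "- 1"] by simp
  ultimately show ?thesis
    by blast
qed

lemma Finv_Lambda: "p \<in> \<Lambda> \<Longrightarrow> Finv p \<in> \<Lambda> \<and> F (Finv p) = p"
  unfolding hFinv_def using Lambda_F_preimage by (metis f_inv_into_f image_eqI inv_into_into)

lemma Finv_eq_piecewise: "p \<in> \<Lambda> \<Longrightarrow> Finv p = Finv_piecewise p"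
  using Finv_Lambda Lambda_subset Finv_piecewise_F by (metis subsetD)

definition proj :: "pt \<Rightarrow> pt" where
  "proj p = (fst p, fst (snd p), if p \<in> R0 then 0 else 5/6)"

lemma proj_F:
  assumes q: "q \<in> R0 \<union> R1" and Fq: "F q \<in> R0 \<union> R1"
  shows "proj (F q) \<in> S123 \<and> G (proj (F q)) = proj q"
proof -
  obtain x y z where qxyz: "q = (x, y, z)" and x: "0 \<le> x" "x \<le> 1" and y: "0 \<le> y" "y \<le> 1"
    and z: "z \<le> 1"
    using q by (cases q) (auto simp: R0_def R1_def)
  have lx: "0 \<le> l0 * x" "l0 * x \<le> l0"
    using l0 x by (auto simp: mult_left_le)
  show ?thesis
  proof (cases "q \<in> R0")
    case True
    define w where "w = (if F q \<in> R0 then 0 else 5/6 :: real)"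
    have proj_Fq: "proj (F q) = (l0 * x, hf y, w)"
      using True F_R0 qxyz by (simp add: proj_def w_def)
    have S13: "(l0 * x, hf y, w) \<in> S1 l0 \<union> S3 l0"
      using lx hf_range[OF y] by (simp add: S1_def S3_def w_def)
    have "G (proj (F q)) = proj q"
      unfolding proj_Fq G_S13[OF S13] using True qxyz l0 hg0_hf[OF y] by (simp add: proj_def)
    then show ?thesis
      using proj_Fq S13 by auto
  next
    case False
    then have Fq_eq: "F q = (3/4 - l0 * x, s0 * (1 - y), b1 * (z - 5/6))"
      using q F_R1 qxyz by simp
    have "b1 * (z - 5/6) \<le> 4 * (1/6)"
      using z b1 False q qxyz by (intro mult_mono) (auto simp: R0_def R1_def)
    then have "F q \<in> R0"
      using Fq Fq_eq by (auto simp: R1_def)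
    then have "proj (F q) = (3/4 - l0 * x, s0 * (1 - y), 0)"
      using Fq_eq by (simp add: proj_def)
    moreover have "(3/4 - l0 * x, s0 * (1 - y), 0) \<in> S2 l0 s0"
      using lx s0 y by (auto simp: S2_def mult_left_le)
    ultimately show ?thesis
      using G_S2 False qxyz l0 s0 by (simp add: proj_def)
  qed
qed

lemma proj_Finv:
  assumes "p \<in> \<Lambda>" shows "proj p \<in> S123 \<and> G (proj p) = proj (Finv p)"
proof -
  have "Finv p \<in> \<Lambda>" and F_Finv: "F (Finv p) = p"
    using Finv_Lambda[OF assms] by simp_all
  then have "Finv p \<in> R0 \<union> R1" "F (Finv p) \<in> R0 \<union> R1"
    using Lambda_subset assms by auto
  then show ?thesis
    using proj_F[of "Finv p"] F_Finv by simp
qed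

lemma proj_Lambda:
  assumes "p \<in> \<Lambda>" shows "proj p \<in> \<Omega>"
proof -
  have "(Finv ^^ n) p \<in> \<Lambda> \<and> (G ^^ n) (proj p) = proj ((Finv ^^ n) p)" for n
    using assms by (induction n) (auto simp: Finv_Lambda proj_Finv)
  then show ?thesis
    using proj_Finv by (simp add: hOmega_def)
qed

definition offset :: "pt \<Rightarrow> real" where
  "offset p = (if snd (snd p) = 5/6 then 5/6 else 0)"

definition rate :: "pt \<Rightarrow> real" where
  "rate p = (if snd (snd p) = 5/6 then 1 / b1 else 1 / b0)"

text \<open>Inverting \<open>F\<close> in the third coordinate gives \<open>z = offset + rate * z'\<close>, where \<open>z'\<close> is the
  third coordinate of the image; unrolling this along the orbit yields the series.\<close>
definition height :: "(nat \<Rightarrow> pt) \<Rightarrow> real" where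
  "height \<omega> = (\<Sum>n. offset (\<omega> n) * (\<Prod>k<n. rate (\<omega> k)))"

definition lift :: "(nat \<Rightarrow> pt) \<Rightarrow> pt" where
  "lift \<omega> = (fst (\<omega> 0), fst (snd (\<omega> 0)), height \<omega>)"

lemma height_term_bounds:
  "0 \<le> offset (\<omega> n) * (\<Prod>k<n. rate (\<omega> k))"
  "offset (\<omega> n) * (\<Prod>k<n. rate (\<omega> k)) \<le> 5/6 * (1/3) ^ n"
proof -
  have rate: "0 \<le> rate p" "rate p \<le> 1/3" for p
    using b0 b1 by (auto simp: rate_def)
  have prod: "0 \<le> (\<Prod>k<n. rate (\<omega> k))"
    by (intro prod_nonneg) (simp add: rate)
  have "(\<Prod>k<n. rate (\<omega> k)) \<le> (1/3) ^ n"
    using prod_mono[of "{..<n}" "\<lambda>k. rate (\<omega> k)" "\<lambda>_. 1/3"] rate by simp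
  moreover have "0 \<le> offset (\<omega> n)" "offset (\<omega> n) \<le> 5/6"
    by (auto simp: offset_def)
  ultimately show "0 \<le> offset (\<omega> n) * (\<Prod>k<n. rate (\<omega> k))"
    "offset (\<omega> n) * (\<Prod>k<n. rate (\<omega> k)) \<le> 5/6 * (1/3) ^ n"
    using prod by (simp, intro mult_mono) simp_all
qed

lemma summable_height: "summable (\<lambda>n. offset (\<omega> n) * (\<Prod>k<n. rate (\<omega> k)))"
  by (rule summable_comparison_test'[of "\<lambda>n. 5/6 * (1/3 :: real) ^ n" 0])
    (use height_term_bounds in \<open>auto intro: summable_mult summable_geometric\<close>)

lemma height_bounds: "0 \<le> height \<omega>" "height \<omega> \<le> 5/4"
proof -
  show "0 \<le> height \<omega>"
    unfolding height_def by (intro suminf_nonneg summable_height height_term_bounds)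
  have "height \<omega> \<le> (\<Sum>n. 5/6 * (1/3 :: real) ^ n)"
    unfolding height_def using summable_height height_term_bounds
    by (intro suminf_le) (auto intro: summable_mult summable_geometric)
  also have "\<dots> = 5/4"
    using suminf_mult[OF summable_geometric[of "1/3 :: real"], of "5/6"] suminf_geometric[of "1/3 :: real"]
    by simp
  finally show "height \<omega> \<le> 5/4" .
qed

lemma height_Suc: "height \<omega> = offset (\<omega> 0) + rate (\<omega> 0) * height (\<omega> \<circ> Suc)"
proof -
  have "(\<lambda>n. offset (\<omega> (Suc n)) * (\<Prod>k<Suc n. rate (\<omega> k)))
      = (\<lambda>n. rate (\<omega> 0) * (offset ((\<omega> \<circ> Suc) n) * (\<Prod>k<n. rate ((\<omega> \<circ> Suc) k))))"
    by (simp add: prod.lessThan_Suc_shift fun_eq_iff algebra_simps del: prod.lessThan_Suc)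
  then show ?thesis
    using suminf_split_head[OF summable_height, of \<omega>] suminf_mult[OF summable_height, of "rate (\<omega> 0)"]
    by (simp add: height_def)
qed

lemma height_lower: "snd (snd (\<omega> 0)) \<noteq> 5/6 \<Longrightarrow> height \<omega> = height (\<omega> \<circ> Suc) / b0"
  and height_upper: "snd (snd (\<omega> 0)) = 5/6 \<Longrightarrow> height \<omega> = 5/6 + height (\<omega> \<circ> Suc) / b1"
  by (subst height_Suc; simp add: offset_def rate_def)+

lemma backward_orbit_G_step:
  assumes "\<omega> \<in> backward_orbits G \<Omega>"
  obtains x y z where "\<omega> 1 = (x, y, z)" "(x, y, z) \<in> S1 l0 \<union> S3 l0" "\<omega> 0 = (x / l0, hg0 y, 0)"
  | x y z where "\<omega> 1 = (x, y, z)" "(x, y, z) \<in> S2 l0 s0" "\<omega> 0 = ((3/4 - x) / l0, 1 - y / s0, 5/6)"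
proof -
  obtain x y z where xyz: "\<omega> 1 = (x, y, z)"
    by (cases "\<omega> 1")
  have "\<omega> 1 \<in> \<Omega>" "G (\<omega> 1) = \<omega> 0"
    using assms unfolding backward_orbits_def One_nat_def by simp_all
  then have "\<omega> 1 \<in> S123" "G (\<omega> 1) = \<omega> 0"
    using Omega_subset by auto
  show ?thesis
  proof (cases "(x, y, z) \<in> S1 l0 \<union> S3 l0")
    case True
    then show ?thesis
      using that(1) xyz G_S13 \<open>G (\<omega> 1) = \<omega> 0\<close> by simp
  next
    case False
    then have "(x, y, z) \<in> S2 l0 s0"
      using \<open>\<omega> 1 \<in> S123\<close> xyz by simp
    then show ?thesis
      using that(2) xyz G_S2 \<open>G (\<omega> 1) = \<omega> 0\<close> by simp
  qed
qed

lemma height_le_1: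
  assumes "\<omega> \<in> backward_orbits G \<Omega>" shows "height \<omega> \<le> 1"
proof -
  have lower: "height \<eta> \<le> 5/24" if "snd (snd (\<eta> 0)) \<noteq> 5/6" for \<eta>
  proof -
    have "height (\<eta> \<circ> Suc) / b0 \<le> (5/4) / 6"
      using height_bounds[of "\<eta> \<circ> Suc"] b0 by (intro frac_le) auto
    then show ?thesis
      using height_lower[of \<eta>, OF that] by simp
  qed
  show ?thesis
  proof (cases "snd (snd (\<omega> 0)) = 5/6")
    case True
    have "\<omega> 1 \<in> S2 l0 s0"
      by (cases rule: backward_orbit_G_step[OF assms]) (use True in auto)
    then have "height (\<omega> \<circ> Suc) \<le> 5/24"
      by (intro lower) (auto simp: S2_def)
    then have "height (\<omega> \<circ> Suc) / b1 \<le> (5/24) / 3"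
      using height_bounds[of "\<omega> \<circ> Suc"] b1 by (intro frac_le) auto
    then show ?thesis
      using height_upper[of \<omega>, OF True] by linarith
  next
    case False
    then show ?thesis
      using lower[of \<omega>] by simp
  qed
qed

lemma height_le_one_sixth:
  assumes "\<omega> \<in> backward_orbits G \<Omega>" "snd (snd (\<omega> 0)) \<noteq> 5/6" shows "height \<omega> \<le> 1/6"
proof -
  have "height (\<omega> \<circ> Suc) / b0 \<le> 1 / 6"
    using height_bounds[of "\<omega> \<circ> Suc"] height_le_1[OF backward_orbits_Suc[OF assms(1)]] b0
    by (intro frac_le) auto
  then show ?thesis
    using height_lower[of \<omega>, OF assms(2)] by simp
qed

lemma lift_F_lower:
  assumes \<omega>: "\<omega> \<in> backward_orbits G \<Omega>" and \<omega>1: "\<omega> 1 = (x, y, z)" "(x, y, z) \<in> S1 l0 \<union> S3 l0"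
    and \<omega>0: "\<omega> 0 = (x / l0, hg0 y, 0)"
  shows "lift \<omega> \<in> R0 \<and> F (lift \<omega>) = lift (\<omega> \<circ> Suc) \<and> proj (lift \<omega>) = \<omega> 0"
proof -
  define Z where "Z = height (\<omega> \<circ> Suc)"
  have x: "0 \<le> x" "x \<le> l0" and y: "0 \<le> y" "y \<le> 1"
    using \<omega>1(2) by (auto simp: S1_def S3_def)
  have lift: "lift \<omega> = (x / l0, hg0 y, Z / b0)"
    using height_lower[of \<omega>] \<omega>0 by (simp add: lift_def Z_def)
  have "0 \<le> Z / b0" "Z / b0 \<le> 1/6"
    using height_bounds[of "\<omega> \<circ> Suc"] b0 height_le_one_sixth[OF \<omega>] \<omega>0 lift
    by (auto simp: Z_def lift_def)
  then have R0: "lift \<omega> \<in> R0"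
    using x l0 hg0_range[OF y] unfolding lift R0_def by auto
  have "F (lift \<omega>) = (x, y, Z)"
    using F_R0[OF R0[unfolded lift]] l0 b0 hf_hg0[OF y] by (simp add: lift)
  moreover have "lift (\<omega> \<circ> Suc) = (x, y, Z)"
    using \<omega>1(1) by (simp add: lift_def Z_def)
  moreover have "proj (lift \<omega>) = \<omega> 0"
    using R0 \<omega>0 by (simp add: proj_def lift)
  ultimately show ?thesis
    using R0 by simp
qed

lemma lift_F_upper:
  assumes \<omega>: "\<omega> \<in> backward_orbits G \<Omega>" and \<omega>1: "\<omega> 1 = (x, y, z)" "(x, y, z) \<in> S2 l0 s0"
    and \<omega>0: "\<omega> 0 = ((3/4 - x) / l0, 1 - y / s0, 5/6)"
  shows "lift \<omega> \<in> R1 - R0 \<and> F (lift \<omega>) = lift (\<omega> \<circ> Suc) \<and> proj (lift \<omega>) = \<omega> 0"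
proof -
  define Z where "Z = height (\<omega> \<circ> Suc)"
  define w where "w = Z / b1"
  have x: "3/4 - l0 \<le> x" "x \<le> 3/4" and y: "0 \<le> y" "y \<le> s0" and "z = 0"
    using \<omega>1(2) by (auto simp: S2_def)
  have lift: "lift \<omega> = ((3/4 - x) / l0, 1 - y / s0, 5/6 + w)"
    using height_upper[of \<omega>] \<omega>0 by (simp add: lift_def Z_def w_def)
  have "Z \<le> 1/6"
    unfolding Z_def using \<omega>1(1) \<open>z = 0\<close> by (intro height_le_one_sixth backward_orbits_Suc \<omega>) simp
  then have "w \<le> (1/6) / 3"
    unfolding w_def using b1 by (intro frac_le) auto
  moreover have "0 \<le> w"
    using height_bounds[of "\<omega> \<circ> Suc"] b1 by (simp add: Z_def w_def)
  moreover have "0 \<le> (3/4 - x) / l0" "(3/4 - x) / l0 \<le> 1"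
    using x l0 by (auto simp: field_simps)
  moreover have "0 \<le> 1 - y / s0" "1 - y / s0 \<le> 1"
    using y s0 by (auto simp: field_simps)
  ultimately have R1: "lift \<omega> \<in> R1 - R0"
    unfolding lift R0_def R1_def by auto
  have "F (lift \<omega>) = (x, y, Z)"
    using F_R1[of "(3/4 - x) / l0" "1 - y / s0" "5/6 + w"] R1 l0 s0 b1 by (simp add: lift w_def)
  moreover have "lift (\<omega> \<circ> Suc) = (x, y, Z)"
    using \<omega>1(1) by (simp add: lift_def Z_def)
  moreover have "proj (lift \<omega>) = \<omega> 0"
    using R1 \<omega>0 by (simp add: proj_def lift)
  ultimately show ?thesis
    using R1 by simp
qed

lemma lift_F:
  assumes "\<omega> \<in> backward_orbits G \<Omega>"
  shows "lift \<omega> \<in> R0 \<union> R1 \<and> F (lift \<omega>) = lift (\<omega> \<circ> Suc) \<and> proj (lift \<omega>) = \<omega> 0"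
  by (cases rule: backward_orbit_G_step[OF assms]) (use lift_F_lower lift_F_upper assms in blast)+

lemma lift_Lambda:
  assumes "\<omega> \<in> backward_orbits G \<Omega>" shows "lift \<omega> \<in> \<Lambda>"
proof -
  obtain V :: "int \<Rightarrow> nat \<Rightarrow> pt"
    where V: "V 0 = \<omega>" "\<And>k. V k \<in> backward_orbits G \<Omega>" "\<And>k. V (k + 1) = V k \<circ> Suc"
    using backward_orbit_bi_infinite[OF assms G_Omega] by blast
  show ?thesis
    unfolding hLambda_def
  proof (intro CollectI exI[of _ "\<lambda>k. lift (V k)"] conjI allI)
    fix k
    show "lift (V k) \<in> R0 \<union> R1"
      using lift_F[OF V(2)] by blast
    show "lift (V (k + 1)) = F (lift (V k))"
      unfolding V(3) using lift_F[OF V(2)] by simp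
  qed (simp add: V(1))
qed

lemma Finv_lift:
  assumes "\<omega> \<in> backward_orbits G \<Omega>"
  shows "Finv (lift \<omega>) = lift (natural_extension_map G \<omega>)"
proof -
  have \<omega>': "natural_extension_map G \<omega> \<in> backward_orbits G \<Omega>"
    using assms G_Omega by (rule natural_extension_map_backward_orbits)
  then have "F (lift (natural_extension_map G \<omega>)) = lift \<omega>"
    using lift_F by simp
  then show ?thesis
    using Finv_eq_piecewise[OF lift_Lambda[OF assms]] Finv_piecewise_F lift_F[OF \<omega>'] by metis
qed

lemma proj_image_Lambda: "proj ` \<Lambda> = \<Omega>"
proof
  show "proj ` \<Lambda> \<subseteq> \<Omega>"
    using proj_Lambda by blast
  show "\<Omega> \<subseteq> proj ` \<Lambda>"
  proof
    fix q assume "q \<in> \<Omega>"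
    then obtain \<omega> where "\<omega> \<in> backward_orbits G \<Omega>" "\<omega> 0 = q"
      using exists_backward_orbit G_preimage_Omega by metis
    then show "q \<in> proj ` \<Lambda>"
      using lift_Lambda lift_F by (metis image_eqI)
  qed
qed

lemma boxes_borel [measurable]:
  "S1 l0 \<in> sets borel" "S2 l0 s0 \<in> sets borel" "S3 l0 \<in> sets borel" "R0 \<in> sets borel" "R1 \<in> sets borel"
  unfolding S1_def S2_def S3_def R0_def R1_def
  by (intro borel_closed closed_Times closed_atLeastAtMost closed_singleton)+

lemma G_borel [measurable]: "G \<in> borel_measurable borel"
proof -
  have "G = (\<lambda>p. if p \<in> S1 l0 \<union> S3 l0 then (fst p / l0, hg0 (fst (snd p)), 0)
      else if p \<in> S2 l0 s0 then ((3/4 - fst p) / l0, 1 - fst (snd p) / s0, 5/6) else p)"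
    by (auto simp: fun_eq_iff hG_def hg1_def split: prod.splits)
  then show ?thesis
    by simp measurable
qed

lemma Omega_borel [measurable]: "\<Omega> \<in> sets borel"
proof -
  have "\<Omega> = {p \<in> space borel. \<forall>n. (G ^^ n) p \<in> S123}"
    by (simp add: hOmega_def)
  also have "\<dots> \<in> sets borel"
    using measurable_funpow[OF G_borel] by measurable
  finally show ?thesis .
qed

lemma proj_borel [measurable]: "proj \<in> borel_measurable borel"
  unfolding proj_def[abs_def] by measurable

lemma Finv_piecewise_borel [measurable]: "Finv_piecewise \<in> borel_measurable borel"
  unfolding Finv_piecewise_def[abs_def] by measurable

lemma measurable_lift [measurable]: "lift \<in> borel_measurable (PiM UNIV (\<lambda>_. borel))"
  unfolding lift_def[abs_def] height_def offset_def rate_def by measurable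

lemma sets_backward_orbits [measurable]: "backward_orbits G \<Omega> \<in> sets (PiM UNIV (\<lambda>_. borel))"
proof -
  have "backward_orbits G \<Omega> = {\<omega> \<in> space (PiM UNIV (\<lambda>_. borel)). \<forall>n. \<omega> n \<in> \<Omega> \<and> G (\<omega> (Suc n)) = \<omega> n}"
    by (simp add: backward_orbits_def space_PiM)
  also have "\<dots> \<in> sets (PiM UNIV (\<lambda>_. borel))"
    using measurable_equality_set[of "\<lambda>\<omega>. G (\<omega> (Suc n))" "PiM UNIV (\<lambda>_. borel)" "\<lambda>\<omega>. \<omega> n" for n]
    by measurable
  finally show ?thesis .
qed

lemma measurable_Finv: "Finv \<in> measurable (restrict_space borel \<Lambda>) (restrict_space borel \<Lambda>)"
proof -
  have "Finv_piecewise \<in> measurable (restrict_space borel \<Lambda>) (restrict_space borel \<Lambda>)"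
    using Finv_Lambda Finv_eq_piecewise by (intro measurable_restrict_space3) auto
  then show ?thesis
    using Finv_eq_piecewise by (subst measurable_cong[where g = Finv_piecewise]) (auto simp: space_restrict_space)
qed

lemma measurable_proj: "proj \<in> measurable (restrict_space borel \<Lambda>) (restrict_space borel \<Omega>)"
  using proj_Lambda by (intro measurable_restrict_space3) auto

lemma zero_Lambda: "(0, 0, 0) \<in> \<Lambda>"
proof -
  have "(0, 0, 0) \<in> R0" "F (0, 0, 0) = (0, 0, 0)"
    by (simp_all add: R0_def hF_def hf_def)
  then show ?thesis
    unfolding hLambda_def by (intro CollectI exI[of _ "\<lambda>_. (0, 0, 0)"]) auto
qed

lemma natural_extension_G:
  assumes "prob_space \<mu>" "sets \<mu> = sets (restrict_space borel \<Omega>)" "invariant_measure \<mu> G"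
  shows "natural_extension \<mu> G \<Omega>"
  using assms G_Omega by (simp add: natural_extension_def)

lemma invariant_measure_on_Lambda:
  assumes "natural_extension \<mu> G \<Omega>"
  obtains \<nu> where "prob_space \<nu>" "sets \<nu> = sets (restrict_space borel \<Lambda>)"
    "invariant_measure \<nu> Finv" "distr \<nu> \<mu> proj = \<mu>"
proof -
  interpret natural_extension \<mu> G \<Omega> by fact
  define \<Psi> where "\<Psi> \<omega> = (if \<omega> \<in> backward_orbits G \<Omega> then lift \<omega> else (0, 0, 0))" for \<omega>
  have \<Psi>: "\<Psi> \<in> measurable E.lim (restrict_space borel \<Lambda>)"
    using lift_Lambda zero_Lambda
    by (intro measurable_lim measurable_restrict_space2) (auto simp: \<Psi>_def[abs_def])
  have proj: "proj \<in> measurable (restrict_space borel \<Lambda>) \<mu>"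
    using measurable_proj measurable_cong_sets[OF refl sets_\<mu>] by blast
  define \<nu> where "\<nu> = distr E.lim (restrict_space borel \<Lambda>) \<Psi>"
  show ?thesis
  proof (rule that[of \<nu>])
    show "prob_space \<nu>"
      unfolding \<nu>_def using \<Psi> by (rule E.P.prob_space_distr)
    show "sets \<nu> = sets (restrict_space borel \<Lambda>)"
      by (simp add: \<nu>_def)
    show "invariant_measure \<nu> Finv"
      unfolding \<nu>_def
    proof (rule invariant_measure_distr[OF \<Psi> measurable_natural_extension_map
          distr_natural_extension_map measurable_Finv])
      show "AE \<omega> in E.lim. Finv (\<Psi> \<omega>) = \<Psi> (natural_extension_map G \<omega>)"
        using AE_backward_orbits
        by eventually_elim (simp add: \<Psi>_def Finv_lift natural_extension_map_backward_orbits G_Omega)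
    qed
    have "distr \<nu> \<mu> proj = distr E.lim \<mu> (proj \<circ> \<Psi>)"
      unfolding \<nu>_def using proj \<Psi> by (rule distr_distr)
    also have "\<dots> = \<mu>"
    proof (rule distr_lim_eq)
      show "proj \<circ> \<Psi> \<in> measurable E.lim \<mu>"
        using \<Psi> proj by (rule measurable_comp)
      show "AE \<omega> in E.lim. (proj \<circ> \<Psi>) \<omega> = \<omega> 0"
        using AE_backward_orbits by eventually_elim (simp add: \<Psi>_def lift_F)
    qed
    finally show "distr \<nu> \<mu> proj = \<mu>" .
  qed
qed

end

theorem theorem5p1:
  fixes l0 b0 s0 b1 :: real and \<mu> :: "pt measure"
  assumes "0 < l0" "l0 < 1/3" "b0 > 6" "0 < s0" "s0 < 1/3" "3 < b1" "b1 < 4"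
    and "prob_space \<mu>"
    and "sets \<mu> = sets (restrict_space borel (hOmega l0 s0))"
    and "invariant_measure \<mu> (hG l0 s0)"
  shows "\<exists>\<nu> :: pt measure. prob_space \<nu>
           \<and> sets \<nu> = sets (restrict_space borel (hLambda l0 b0 s0 b1))
           \<and> invariant_measure \<nu> (hFinv l0 b0 s0 b1)
           \<and> ks_entropy \<nu> (hFinv l0 b0 s0 b1) \<ge> ks_entropy \<mu> (hG l0 s0)"
proof -
  interpret horseshoe l0 b0 s0 b1
    using assms(1-7) by unfold_locales
  interpret \<mu>: natural_extension \<mu> G \<Omega>
    using assms(8-10) by (rule natural_extension_G)
  obtain \<nu> where \<nu>: "prob_space \<nu>" "sets \<nu> = sets (restrict_space borel \<Lambda>)"
    "invariant_measure \<nu> Finv" "distr \<nu> \<mu> proj = \<mu>"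
    using invariant_measure_on_Lambda[OF \<mu>.natural_extension_axioms] by blast
  have space_\<nu>: "space \<nu> = \<Lambda>"
    using sets_eq_imp_space_eq[OF \<nu>(2)] by (simp add: space_restrict_space)
  interpret factor_map \<mu> \<nu> proj G Finv
  proof
    show "proj \<in> measurable \<nu> \<mu>"
      using measurable_proj measurable_cong_sets[OF \<nu>(2) \<mu>.sets_\<mu>] by blast
    show "proj ` space \<nu> = space \<mu>"
      using space_\<nu> \<mu>.space_\<mu> proj_image_Lambda by simp
  qed (use \<nu>(4) \<mu>.measurable_T space_\<nu> Finv_Lambda proj_Finv in auto)
  show ?thesis
    using \<nu> ks_entropy_le by blast
qed

end
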